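(* Let $\mathfrak{n}$ be the real $7$-dimensional Lie algebra with basis $e_1,\dots,e_7$ whose nonzero brackets (up to antisymmetry) are $[e_1,e_2]=e_4$, $[e_1,e_4]=e_5$, $[e_1,e_5]=e_6$, $[e_1,e_6]=e_7$, $[e_2,e_3]=e_6$, $[e_2,e_4]=e_6$, $[e_2,e_5]=e_7$, $[e_3,e_4]=-e_7$. Then $\mathfrak{n}$ is an Einstein nilradical.
   Context: A real nilpotent Lie algebra $\mathfrak{n}$ is called an Einstein nilradical if it admits an inner product such that the left-invariant Riemannian metric it defines on the simply connected nilpotent Lie group with Lie algebra $\mathfrak{n}$ is a nilsoliton, i.e. its Ricci operator satisfies $\mathrm{Ric}=c\,\mathrm{Id}+D$ for some $c\in\mathbb{R}$ and some derivation $D$ of $\mathfrak{n}$. Brackets of basis elements not listed are zero. *)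

theory Defs
  imports "HOL-Analysis.Analysis"
begin

text \<open>The underlying vector space of the Lie algebra is real^7.  The basis vector
  e_i (i = 1..7) is the standard unit vector with index (i-1) of the numeral type 7.\<close>

definition ebas :: "nat \<Rightarrow> real^7" where
  "ebas i = axis (of_nat (i - 1)) 1"

definition coord :: "nat \<Rightarrow> real^7 \<Rightarrow> real" where
  "coord i x = x $ (of_nat (i - 1))"

definition brb0 :: "nat \<Rightarrow> nat \<Rightarrow> real^7" where
  "brb0 i j =
    (if (i, j) = (1, 2) then ebas 4
     else if (i, j) = (1, 4) then ebas 5
     else if (i, j) = (1, 5) then ebas 6
     else if (i, j) = (1, 6) then ebas 7
     else if (i, j) = (2, 3) then ebas 6
     else if (i, j) = (2, 4) then ebas 6
     else if (i, j) = (2, 5) then ebas 7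
     else if (i, j) = (3, 4) then - ebas 7
     else 0)"

definition brb :: "nat \<Rightarrow> nat \<Rightarrow> real^7" where
  "brb i j = (if i < j then brb0 i j else if j < i then - brb0 j i else 0)"

definition brk :: "real^7 \<Rightarrow> real^7 \<Rightarrow> real^7" where
  "brk x y = (\<Sum>i\<in>{1..7}. \<Sum>j\<in>{1..7}. (coord i x * coord j y) *\<^sub>R brb i j)"

definition is_derivation :: "(real^7 \<Rightarrow> real^7) \<Rightarrow> bool" where
  "is_derivation D \<longleftrightarrow> linear D \<and>
     (\<forall>x y. D (brk x y) = brk (D x) y + brk x (D y))"

definition is_inner_product :: "(real^7 \<Rightarrow> real^7 \<Rightarrow> real) \<Rightarrow> bool" where
  "is_inner_product ip \<longleftrightarrow> bilinear ip \<and> (\<forall>x y. ip x y = ip y x) \<and>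
     (\<forall>x. x \<noteq> 0 \<longrightarrow> ip x x > 0)"

definition is_orthonormal_basis ::
  "(real^7 \<Rightarrow> real^7 \<Rightarrow> real) \<Rightarrow> (nat \<Rightarrow> real^7) \<Rightarrow> bool" where
  "is_orthonormal_basis ip u \<longleftrightarrow>
     (\<forall>i\<in>{1..7}. \<forall>j\<in>{1..7}. ip (u i) (u j) = (if i = j then 1 else 0))"

text \<open>Ricci form of the left-invariant metric defined by ip on the nilpotent Lie group,
  computed in an ip-orthonormal basis u_1..u_7 (standard formula for nilpotent Lie
  algebras, independent of the choice of orthonormal basis):
  ric(X,Y) = -1/2 sum_{i,j} ip([X,u_i],u_j) ip([Y,u_i],u_j)
             + 1/4 sum_{i,j} ip([u_i,u_j],X) ip([u_i,u_j],Y).\<close>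

definition ric_form ::
  "(real^7 \<Rightarrow> real^7 \<Rightarrow> real) \<Rightarrow> (nat \<Rightarrow> real^7) \<Rightarrow> real^7 \<Rightarrow> real^7 \<Rightarrow> real" where
  "ric_form ip u X Y =
     - (1/2) * (\<Sum>i\<in>{1..7}. \<Sum>j\<in>{1..7}. ip (brk X (u i)) (u j) * ip (brk Y (u i)) (u j))
     + (1/4) * (\<Sum>i\<in>{1..7}. \<Sum>j\<in>{1..7}. ip (brk (u i) (u j)) X * ip (brk (u i) (u j)) Y)"

text \<open>Ricci operator: the ip-symmetric endomorphism with ip (Ric X) Y = ric(X,Y).\<close>

definition ricci_op ::
  "(real^7 \<Rightarrow> real^7 \<Rightarrow> real) \<Rightarrow> (nat \<Rightarrow> real^7) \<Rightarrow> real^7 \<Rightarrow> real^7" where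
  "ricci_op ip u X = (\<Sum>k\<in>{1..7}. ric_form ip u X (u k) *\<^sub>R u k)"

definition is_nilsoliton :: "(real^7 \<Rightarrow> real^7 \<Rightarrow> real) \<Rightarrow> bool" where
  "is_nilsoliton ip \<longleftrightarrow> (\<exists>u. is_orthonormal_basis ip u \<and>
     (\<exists>c D. is_derivation D \<and> (\<forall>X. ricci_op ip u X = c *\<^sub>R X + D X)))"

definition einstein_nilradical :: bool where
  "einstein_nilradical \<longleftrightarrow> (\<exists>ip. is_inner_product ip \<and> is_nilsoliton ip)"

end

theory Submission
  imports Defs
begin

text \<open>The nilsoliton derivation is sought as a multiple of the grading derivation that
  multiplies e1, ..., e7 by their degrees 1, 2, 3, 3, 4, 5, 6.  The metric making this work is
  diagonal in the basis e1, e2, e3 - 5/12 e4, e4, ..., e7 (replacing e3 does not disturb the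
  grading, as e3 and e4 have the same degree), with squared lengths 1, 1, 25/42, 120/133,
  100/133, 500/931, 6875/17689.  Computing the Ricci form in this basis gives
  Ric = -125/56 Id + 15/28 D for the grading derivation D.\<close>

lemma exhaust_7:
  fixes x :: 7
  shows "x = of_nat 0 \<or> x = of_nat 1 \<or> x = of_nat 2 \<or> x = of_nat 3 \<or> x = of_nat 4 \<or> x = of_nat 5 \<or> x = of_nat 6"
proof (induct x)
  case (of_int z)
  then have "z = 0 \<or> z = 1 \<or> z = 2 \<or> z = 3 \<or> z = 4 \<or> z = 5 \<or> z = 6" by fastforce
  then show ?case by auto
qed

lemma atLeastAtMost_1_7: "{1..7::nat} = {1,2,3,4,5,6,7}" by auto

lemma sum_1_7: "(\<Sum>k\<in>{1..7::nat}. f k) = f 1 + f 2 + f 3 + f 4 + f 5 + f 6 + f 7"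
  unfolding atLeastAtMost_1_7 by (simp add: algebra_simps)

lemma ball_1_7: "(\<forall>k\<in>{1..7::nat}. P k) \<longleftrightarrow> P 1 \<and> P 2 \<and> P 3 \<and> P 4 \<and> P 5 \<and> P 6 \<and> P 7"
  unfolding atLeastAtMost_1_7 by simp

lemma coord_add [simp]: "coord k (x + y) = coord k x + coord k y" by (simp add: coord_def)
lemma coord_diff [simp]: "coord k (x - y) = coord k x - coord k y" by (simp add: coord_def)
lemma coord_minus [simp]: "coord k (- x) = - coord k x" by (simp add: coord_def)
lemma coord_zero [simp]: "coord k 0 = 0" by (simp add: coord_def)
lemma coord_scaleR [simp]: "coord k (a *\<^sub>R x) = a * coord k x" by (simp add: coord_def)
lemma coord_sum [simp]: "coord k (sum f A) = (\<Sum>a\<in>A. coord k (f a))" by (simp add: coord_def)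

lemma coord_ebas: "coord k (ebas m) = (if (of_nat (k - 1) :: 7) = of_nat (m - 1) then 1 else 0)"
  by (simp add: coord_def ebas_def axis_def)

lemma vec7_eq_iff_coord: "(x::real^7) = y \<longleftrightarrow> (\<forall>k\<in>{1..7}. coord k x = coord k y)"
proof
  assume coords: "\<forall>k\<in>{1..7}. coord k x = coord k y"
  show "x = y"
    unfolding vec_eq_iff
  proof
    fix i :: 7
    show "x $ i = y $ i"
      using exhaust_7[of i] coords unfolding ball_1_7 by (auto simp: coord_def)
  qed
qed simp

lemma brk_scaleR_left: "brk (a *\<^sub>R x) y = a *\<^sub>R brk x y"
  by (simp add: brk_def scaleR_sum_right mult.assoc)

lemma brk_scaleR_right: "brk x (a *\<^sub>R y) = a *\<^sub>R brk x y"
  by (simp add: brk_def scaleR_sum_right mult.left_commute)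

lemma coord_brk:
  "coord 1 (brk x y) = 0"
  "coord 2 (brk x y) = 0"
  "coord 3 (brk x y) = 0"
  "coord 4 (brk x y) = coord 1 x * coord 2 y - coord 2 x * coord 1 y"
  "coord 5 (brk x y) = coord 1 x * coord 4 y - coord 4 x * coord 1 y"
  "coord 6 (brk x y) = coord 1 x * coord 5 y - coord 5 x * coord 1 y
     + coord 2 x * coord 3 y - coord 3 x * coord 2 y + coord 2 x * coord 4 y - coord 4 x * coord 2 y"
  "coord 7 (brk x y) = coord 1 x * coord 6 y - coord 6 x * coord 1 y
     + coord 2 x * coord 5 y - coord 5 x * coord 2 y - coord 3 x * coord 4 y + coord 4 x * coord 3 y"
  unfolding brk_def coord_sum coord_scaleR sum_1_7
  by (simp_all add: brb_def brb0_def coord_ebas algebra_simps)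

lemma is_derivation_scaleR:
  assumes "is_derivation D"
  shows "is_derivation (\<lambda>x. a *\<^sub>R D x)"
  using assms unfolding is_derivation_def
  by (auto intro: linear_compose_scale_right simp: brk_scaleR_left brk_scaleR_right scaleR_add_right)

locale diagonal_metric =
  fixes v :: "nat \<Rightarrow> real^7" and c :: "nat \<Rightarrow> real^7 \<Rightarrow> real" and q :: "nat \<Rightarrow> real"
  assumes linear_coeff: "linear (c k)"
    and coeff_basis: "i \<in> {1..7} \<Longrightarrow> j \<in> {1..7} \<Longrightarrow> c i (v j) = (if i = j then 1 else 0)"
    and basis_expansion: "x = (\<Sum>k\<in>{1..7}. c k x *\<^sub>R v k)"
    and weight_pos: "k \<in> {1..7} \<Longrightarrow> 0 < q k"
begin

definition ip :: "real^7 \<Rightarrow> real^7 \<Rightarrow> real" where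
  "ip x y = (\<Sum>k\<in>{1..7}. q k * c k x * c k y)"

definition onb :: "nat \<Rightarrow> real^7" where
  "onb k = (1 / sqrt (q k)) *\<^sub>R v k"

text \<open>The Ricci form of ip, written in the orthogonal basis v instead of the orthonormal
  basis onb so that no square roots of the weights occur.\<close>

definition ricci_in_basis :: "real^7 \<Rightarrow> real^7 \<Rightarrow> real" where
  "ricci_in_basis X Y =
     - (1/2) * (\<Sum>i\<in>{1..7}. \<Sum>j\<in>{1..7}. q j / q i * (c j (brk X (v i)) * c j (brk Y (v i))))
     + (1/4) * (\<Sum>i\<in>{1..7}. \<Sum>j\<in>{1..7}. 1 / (q i * q j) * (ip (brk (v i) (v j)) X * ip (brk (v i) (v j)) Y))"

lemma weight_nonzero: "k \<in> {1..7} \<Longrightarrow> q k \<noteq> 0"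
  using weight_pos by fastforce

lemma sqrt_weight_sq: "k \<in> {1..7} \<Longrightarrow> sqrt (q k) * sqrt (q k) = q k"
  using weight_pos by fastforce

lemma coeff_add: "c k (x + y) = c k x + c k y"
  using linear_coeff by (rule linear_add)

lemma coeff_scaleR: "c k (a *\<^sub>R x) = a * c k x"
  using linear_coeff by (simp add: linear_scale)

lemma ip_scaleR_left: "ip (a *\<^sub>R x) y = a * ip x y"
  by (simp add: ip_def coeff_scaleR sum_distrib_left algebra_simps)

lemma ip_scaleR_right: "ip x (a *\<^sub>R y) = a * ip x y"
  by (simp add: ip_def coeff_scaleR sum_distrib_left algebra_simps)

lemma coeff_onb: "i \<in> {1..7} \<Longrightarrow> j \<in> {1..7} \<Longrightarrow> c i (onb j) = (if i = j then 1 / sqrt (q j) else 0)"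
  by (simp add: onb_def coeff_scaleR coeff_basis)

lemma ip_basis:
  assumes "j \<in> {1..7}"
  shows "ip x (v j) = q j * c j x"
proof -
  have "ip x (v j) = (\<Sum>k\<in>{1..7}. if k = j then q j * c j x else 0)"
    unfolding ip_def by (rule sum.cong) (simp_all add: coeff_basis[OF _ assms])
  also have "\<dots> = q j * c j x"
    using assms by simp
  finally show ?thesis .
qed

lemma ip_onb:
  assumes "j \<in> {1..7}"
  shows "ip x (onb j) = sqrt (q j) * c j x"
proof -
  have "ip x (onb j) = q j / sqrt (q j) * c j x"
    by (simp add: onb_def ip_scaleR_right ip_basis[OF assms])
  also have "q j / sqrt (q j) = sqrt (q j)"
    using weight_pos[OF assms] by (simp add: real_div_sqrt)
  finally show ?thesis .
qed

lemma is_inner_product_ip: "is_inner_product ip"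
  unfolding is_inner_product_def
proof (intro conjI allI impI)
  show "bilinear ip"
    by (auto intro!: linearI simp: bilinear_def ip_def coeff_add coeff_scaleR
        sum.distrib sum_distrib_left algebra_simps)
  show "ip x y = ip y x" for x y
    by (simp add: ip_def algebra_simps)
  fix x :: "real^7"
  assume "x \<noteq> 0"
  have "\<exists>k\<in>{1..7}. c k x \<noteq> 0"
  proof (rule ccontr)
    assume "\<not> (\<exists>k\<in>{1..7}. c k x \<noteq> 0)"
    then have "(\<Sum>k\<in>{1..7}. c k x *\<^sub>R v k) = 0"
      by (auto intro: sum.neutral)
    with basis_expansion[of x] have "x = 0"
      by (rule trans)
    with \<open>x \<noteq> 0\<close> show False ..
  qed
  then obtain k where k: "k \<in> {1..7}" "c k x \<noteq> 0"
    by blast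
  have "0 \<le> q i * c i x * c i x" if "i \<in> {1..7}" for i
    using weight_pos[OF that] by (metis less_imp_le mult.assoc mult_nonneg_nonneg zero_le_square)
  moreover have "0 < q k * c k x * c k x"
    using weight_pos[OF k(1)] k(2) by (metis mult.assoc mult_pos_pos not_real_square_gt_zero)
  ultimately show "0 < ip x x"
    unfolding ip_def using k(1) by (intro sum_pos2) auto
qed

lemma is_orthonormal_basis_onb: "is_orthonormal_basis ip onb"
  unfolding is_orthonormal_basis_def
proof (intro ballI)
  fix i j :: nat assume i: "i \<in> {1..7}" and j: "j \<in> {1..7}"
  show "ip (onb i) (onb j) = (if i = j then 1 else 0)"
    using sqrt_weight_sq[OF i] weight_nonzero[OF j] by (simp add: ip_onb[OF j] coeff_onb[OF j i])
qed

lemma ric_form_onb: "ric_form ip onb X Y = ricci_in_basis X Y"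
proof -
  have first: "(\<Sum>i\<in>{1..7}. \<Sum>j\<in>{1..7}. ip (brk X (onb i)) (onb j) * ip (brk Y (onb i)) (onb j))
    = (\<Sum>i\<in>{1..7}. \<Sum>j\<in>{1..7}. q j / q i * (c j (brk X (v i)) * c j (brk Y (v i))))"
  proof (intro sum.cong refl)
    fix i j :: nat assume i: "i \<in> {1..7}" and j: "j \<in> {1..7}"
    show "ip (brk X (onb i)) (onb j) * ip (brk Y (onb i)) (onb j)
      = q j / q i * (c j (brk X (v i)) * c j (brk Y (v i)))"
      using sqrt_weight_sq[OF i] sqrt_weight_sq[OF j] weight_pos[OF i]
      unfolding ip_onb[OF j] by (simp add: onb_def brk_scaleR_right coeff_scaleR field_simps)
  qed
  have second: "(\<Sum>i\<in>{1..7}. \<Sum>j\<in>{1..7}. ip (brk (onb i) (onb j)) X * ip (brk (onb i) (onb j)) Y)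
    = (\<Sum>i\<in>{1..7}. \<Sum>j\<in>{1..7}. 1 / (q i * q j) * (ip (brk (v i) (v j)) X * ip (brk (v i) (v j)) Y))"
  proof (intro sum.cong refl)
    fix i j :: nat assume i: "i \<in> {1..7}" and j: "j \<in> {1..7}"
    show "ip (brk (onb i) (onb j)) X * ip (brk (onb i) (onb j)) Y
      = 1 / (q i * q j) * (ip (brk (v i) (v j)) X * ip (brk (v i) (v j)) Y)"
      using sqrt_weight_sq[OF i] sqrt_weight_sq[OF j] weight_pos[OF i] weight_pos[OF j]
      by (simp add: onb_def brk_scaleR_left brk_scaleR_right ip_scaleR_left field_simps)
  qed
  show ?thesis
    unfolding ric_form_def ricci_in_basis_def first second ..
qed

lemma ricci_in_basis_scaleR: "ricci_in_basis X (a *\<^sub>R Y) = a * ricci_in_basis X Y"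
  by (simp add: ricci_in_basis_def brk_scaleR_left coeff_scaleR ip_scaleR_right
      sum_distrib_left mult.left_commute distrib_left)

lemma ricci_op_onb: "ricci_op ip onb X = (\<Sum>k\<in>{1..7}. (ricci_in_basis X (v k) / q k) *\<^sub>R v k)"
  unfolding ricci_op_def ric_form_onb
proof (rule sum.cong [OF refl])
  fix k :: nat assume "k \<in> {1..7}"
  then have "0 < q k"
    by (rule weight_pos)
  then show "ricci_in_basis X (onb k) *\<^sub>R onb k = (ricci_in_basis X (v k) / q k) *\<^sub>R v k"
    by (simp add: onb_def ricci_in_basis_scaleR abs_of_pos field_simps)
qed

lemma is_nilsoliton_ip:
  assumes "is_derivation D"
    and D_basis: "\<And>k. k \<in> {1..7} \<Longrightarrow> D (v k) = \<mu> k *\<^sub>R v k"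
    and ricci_basis: "\<And>X k. k \<in> {1..7} \<Longrightarrow> ricci_in_basis X (v k) = q k * (a + \<mu> k) * c k X"
  shows "is_nilsoliton ip"
proof -
  have "linear D"
    using assms(1) by (simp add: is_derivation_def)
  have "ricci_op ip onb X = a *\<^sub>R X + D X" for X
  proof -
    have DX: "D X = (\<Sum>k\<in>{1..7}. c k X *\<^sub>R D (v k))"
    proof -
      have "D X = D (\<Sum>k\<in>{1..7}. c k X *\<^sub>R v k)"
        by (rule arg_cong[OF basis_expansion])
      also have "\<dots> = (\<Sum>k\<in>{1..7}. c k X *\<^sub>R D (v k))"
        using \<open>linear D\<close> by (simp add: linear_sum linear_scale)
      finally show ?thesis .
    qed
    have "ricci_op ip onb X = (\<Sum>k\<in>{1..7}. ((a + \<mu> k) * c k X) *\<^sub>R v k)"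
      unfolding ricci_op_onb
      by (rule sum.cong) (simp_all add: ricci_basis weight_nonzero)
    also have "\<dots> = a *\<^sub>R (\<Sum>k\<in>{1..7}. c k X *\<^sub>R v k) + (\<Sum>k\<in>{1..7}. c k X *\<^sub>R D (v k))"
      by (auto simp: D_basis scaleR_sum_right sum.distrib[symmetric] algebra_simps
          intro!: sum.cong)
    also have "\<dots> = a *\<^sub>R X + D X"
      by (simp only: DX basis_expansion[symmetric])
    finally show ?thesis .
  qed
  then show ?thesis
    unfolding is_nilsoliton_def
    using is_orthonormal_basis_onb assms(1) by blast
qed

end

definition soliton_basis :: "nat \<Rightarrow> real^7" where
  "soliton_basis k = (if k = 3 then ebas 3 - (5/12) *\<^sub>R ebas 4 else ebas k)"

definition soliton_coord :: "nat \<Rightarrow> real^7 \<Rightarrow> real" where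
  "soliton_coord k x = (if k = 4 then coord 4 x + 5/12 * coord 3 x else coord k x)"

definition soliton_weight :: "nat \<Rightarrow> real" where
  "soliton_weight k =
    (if k = 3 then 25/42 else if k = 4 then 120/133 else if k = 5 then 100/133
     else if k = 6 then 500/931 else if k = 7 then 6875/17689 else 1)"

definition grade :: "nat \<Rightarrow> real" where
  "grade k = (if k \<le> 3 then real k else real k - 1)"

definition grading :: "real^7 \<Rightarrow> real^7" where
  "grading x = (\<Sum>k\<in>{1..7}. (grade k * coord k x) *\<^sub>R ebas k)"

lemma coord_grading:
  assumes "k \<in> {1..7}"
  shows "coord k (grading x) = grade k * coord k x"
  using assms unfolding atLeastAtMost_1_7 grading_def
  by (auto simp: sum_1_7 coord_ebas)

lemma is_derivation_grading: "is_derivation grading"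
  unfolding is_derivation_def
proof (intro conjI allI)
  show "linear grading"
    by (rule linearI) (simp_all add: vec7_eq_iff_coord coord_grading algebra_simps)
  show "grading (brk x y) = brk (grading x) y + brk x (grading y)" for x y
    unfolding vec7_eq_iff_coord ball_1_7
    by (simp add: coord_grading coord_brk[simplified] grade_def algebra_simps)
qed

lemma grading_soliton_basis:
  assumes "k \<in> {1..7}"
  shows "grading (soliton_basis k) = grade k *\<^sub>R soliton_basis k"
  using assms unfolding atLeastAtMost_1_7 vec7_eq_iff_coord ball_1_7
  by (auto simp: coord_grading soliton_basis_def coord_ebas grade_def)

interpretation soliton: diagonal_metric soliton_basis soliton_coord soliton_weight
proof (rule diagonal_metric.intro)
  show "linear (soliton_coord k)" for k
    by (rule linearI) (simp_all add: soliton_coord_def algebra_simps)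
  show "soliton_coord i (soliton_basis j) = (if i = j then 1 else 0)"
    if "i \<in> {1..7}" "j \<in> {1..7}" for i j
    using that unfolding atLeastAtMost_1_7
    by (auto simp: soliton_coord_def soliton_basis_def coord_ebas)
  show "x = (\<Sum>k\<in>{1..7}. soliton_coord k x *\<^sub>R soliton_basis k)" for x
    unfolding vec7_eq_iff_coord ball_1_7 coord_sum sum_1_7
    by (simp add: soliton_coord_def soliton_basis_def coord_ebas)
  show "0 < soliton_weight k" if "k \<in> {1..7}" for k
    by (simp add: soliton_weight_def)
qed

lemma soliton_ricci_eigen:
  assumes "k \<in> {1..7}"
  shows "soliton.ricci_in_basis X (soliton_basis k)
    = soliton_weight k * (- 125/56 + 15/28 * grade k) * soliton_coord k X"
proof -
  from assms have "k = 1 \<or> k = 2 \<or> k = 3 \<or> k = 4 \<or> k = 5 \<or> k = 6 \<or> k = 7"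
    by auto
  then show ?thesis
    unfolding soliton.ricci_in_basis_def soliton.ip_def sum_1_7
    by (elim disjE; simp add: soliton_coord_def soliton_basis_def soliton_weight_def grade_def
        coord_brk[simplified] coord_ebas algebra_simps; simp add: field_simps)
qed

theorem mainTheorem9:
  shows "einstein_nilradical"
  unfolding einstein_nilradical_def
proof (intro exI conjI)
  show "is_inner_product soliton.ip"
    by (rule soliton.is_inner_product_ip)
  show "is_nilsoliton soliton.ip"
  proof (rule soliton.is_nilsoliton_ip)
    show "is_derivation (\<lambda>x. (15/28) *\<^sub>R grading x)"
      by (rule is_derivation_scaleR[OF is_derivation_grading])
    show "(15/28) *\<^sub>R grading (soliton_basis k) = (15/28 * grade k) *\<^sub>R soliton_basis k"
      if "k \<in> {1..7}" for k
      by (simp add: grading_soliton_basis[OF that])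
    show "soliton.ricci_in_basis X (soliton_basis k)
      = soliton_weight k * (- 125/56 + 15/28 * grade k) * soliton_coord k X"
      if "k \<in> {1..7}" for X k
      by (rule soliton_ricci_eigen[OF that])
  qed
qed

end
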